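(* The refinement system $p:\mathbf{Subset}\to\mathbf{Rel}$ is symmetric monoidal closed, with tensor product and implication of $\mathbf{Subset}$ defined as $(A,R)\otimes(B,S)=(A\times B,R\otimes S)$ and $(A,R)\multimap(B,S)=(A\times B,R\multimap S)$, where $R\otimes S=\{(a,b)\in A\times B\mid Ra\wedge Sb\}$ and $R\multimap S=\{(a,b)\in A\times B\mid Ra\Rightarrow Sb\}$.
   Context: $\mathbf{Rel}$ is the compact closed category $(\mathbf{Rel},\times,1)$ of sets and binary relations (a morphism from $A$ to $B$ is a relation $M\subseteq A\times B$). $\mathbf{Subset}$ has objects $(A,R)$ with $R\subseteq A$ and morphisms $M:(A,R)\to(B,S)$ the relations $M\subseteq A\times B$ with $(M(a,b)\wedge Ra)\Rightarrow Sb$ for all $a,b$; $p$ forgets the subset. A (symmetric) monoidal closed refinement system is a functor $p:\mathscr{E}\to\mathscr{B}$ between (symmetric) monoidal closed categories that preserves the (symmetric) monoidal closed structure up to coherent isomorphism. *)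

theory Defs
  imports Main
begin

(* Rel: an object is a set, represented by (the universe of) a HOL type;
   a morphism A -> B is a relation M :: ('a \<times> 'b) set.
   Subset: an object is (A,R) with R \<subseteq> A, i.e. R :: 'a set;
   M is a morphism (A,R) -> (B,S) iff (M(a,b) \<and> R a) \<Longrightarrow> S b. *)

definition subset_mor :: "'a set \<Rightarrow> 'b set \<Rightarrow> ('a \<times> 'b) set \<Rightarrow> bool" where
  "subset_mor R S M \<longleftrightarrow> (\<forall>a b. (a, b) \<in> M \<and> a \<in> R \<longrightarrow> b \<in> S)"

definition sub_tensor :: "'a set \<Rightarrow> 'b set \<Rightarrow> ('a \<times> 'b) set" where
  "sub_tensor R S = {(a, b). a \<in> R \<and> b \<in> S}"

definition sub_limp :: "'a set \<Rightarrow> 'b set \<Rightarrow> ('a \<times> 'b) set" where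
  "sub_limp R S = {(a, b). a \<in> R \<longrightarrow> b \<in> S}"

definition sub_unit :: "unit set" where
  "sub_unit = UNIV"

(* symmetric monoidal closed structure of Rel (A \<otimes> B = A \<times> B, A \<multimap> B = A \<times> B) *)
definition rel_tensor :: "('a \<times> 'c) set \<Rightarrow> ('b \<times> 'd) set \<Rightarrow> (('a \<times> 'b) \<times> ('c \<times> 'd)) set" where
  "rel_tensor M N = {((a, b), (c, d)). (a, c) \<in> M \<and> (b, d) \<in> N}"

(* action of \<multimap> on morphisms M : A' -> A, N : B -> B' gives (A \<multimap> B) -> (A' \<multimap> B') *)
definition rel_limp :: "('a' \<times> 'a) set \<Rightarrow> ('b \<times> 'b') set \<Rightarrow> (('a \<times> 'b) \<times> ('a' \<times> 'b')) set" where
  "rel_limp M N = {((a, b), (a', b')). (a', a) \<in> M \<and> (b, b') \<in> N}"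

definition rel_assoc :: "((('a \<times> 'b) \<times> 'c) \<times> ('a \<times> ('b \<times> 'c))) set" where
  "rel_assoc = {(((a, b), c), (a, (b, c))) | a b c. True}"

definition rel_lunit :: "((unit \<times> 'a) \<times> 'a) set" where
  "rel_lunit = {(((), a), a) | a. True}"

definition rel_runit :: "(('a \<times> unit) \<times> 'a) set" where
  "rel_runit = {((a, ()), a) | a. True}"

definition rel_sym :: "(('a \<times> 'b) \<times> ('b \<times> 'a)) set" where
  "rel_sym = {((a, b), (b, a)) | a b. True}"

definition rel_curry :: "((('a \<times> 'b) \<times> 'c) set) \<Rightarrow> ('a \<times> ('b \<times> 'c)) set" where
  "rel_curry M = {(a, (b, c)). ((a, b), c) \<in> M}"

definition rel_uncurry :: "('a \<times> ('b \<times> 'c)) set \<Rightarrow> (('a \<times> 'b) \<times> 'c) set" where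
  "rel_uncurry N = {((a, b), c). (a, (b, c)) \<in> N}"

definition rel_eval :: "((('a \<times> 'b) \<times> 'a) \<times> 'b) set" where
  "rel_eval = {(((a, b), a), b) | a b. True}"

end

theory Submission
  imports Defs
begin

lemma subset_mor_rel_tensor:
  assumes "subset_mor R R' M" and "subset_mor S S' N"
  shows "subset_mor (sub_tensor R S) (sub_tensor R' S') (rel_tensor M N)"
  using assms by (auto simp: subset_mor_def sub_tensor_def rel_tensor_def)

lemma subset_mor_rel_limp:
  assumes "subset_mor R' R M" and "subset_mor S S' N"
  shows "subset_mor (sub_limp R S) (sub_limp R' S') (rel_limp M N)"
  using assms by (auto simp: subset_mor_def sub_limp_def rel_limp_def)

lemma subset_mor_rel_assoc:
  "subset_mor (sub_tensor (sub_tensor R S) T) (sub_tensor R (sub_tensor S T)) rel_assoc"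
  by (auto simp: subset_mor_def sub_tensor_def rel_assoc_def)

lemma subset_mor_converse_rel_assoc:
  "subset_mor (sub_tensor R (sub_tensor S T)) (sub_tensor (sub_tensor R S) T) (converse rel_assoc)"
  by (auto simp: subset_mor_def sub_tensor_def rel_assoc_def)

lemma subset_mor_rel_lunit: "subset_mor (sub_tensor sub_unit R) R rel_lunit"
  by (auto simp: subset_mor_def sub_tensor_def rel_lunit_def)

lemma subset_mor_converse_rel_lunit: "subset_mor R (sub_tensor sub_unit R) (converse rel_lunit)"
  by (auto simp: subset_mor_def sub_tensor_def sub_unit_def rel_lunit_def)

lemma subset_mor_rel_runit: "subset_mor (sub_tensor R sub_unit) R rel_runit"
  by (auto simp: subset_mor_def sub_tensor_def rel_runit_def)

lemma subset_mor_converse_rel_runit: "subset_mor R (sub_tensor R sub_unit) (converse rel_runit)"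
  by (auto simp: subset_mor_def sub_tensor_def sub_unit_def rel_runit_def)

lemma subset_mor_rel_sym: "subset_mor (sub_tensor R S) (sub_tensor S R) rel_sym"
  by (auto simp: subset_mor_def sub_tensor_def rel_sym_def)

text \<open>Both sides say: \<open>((a, b), c) \<in> M\<close>, \<open>a \<in> R\<close> and \<open>b \<in> S\<close> imply \<open>c \<in> T\<close>;
  they differ only in whether \<open>b \<in> S\<close> is a hypothesis or the premise of the implication in
  \<open>sub_limp\<close>.\<close>

lemma subset_mor_rel_curry_iff:
  "subset_mor (sub_tensor R S) T M \<longleftrightarrow> subset_mor R (sub_limp S T) (rel_curry M)"
  by (auto simp: subset_mor_def sub_tensor_def sub_limp_def rel_curry_def)

lemma subset_mor_rel_eval: "subset_mor (sub_tensor (sub_limp R S) R) S rel_eval"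
  by (auto simp: subset_mor_def sub_tensor_def sub_limp_def rel_eval_def)

theorem mainTheorem2:
  shows
  \<comment> \<open>tensor and implication are functorial on Subset, lifting those of Rel\<close>
  "(\<forall>(R::'a set) (R'::'c set) (S::'b set) (S'::'d set) M N.
      subset_mor R R' M \<and> subset_mor S S' N \<longrightarrow>
      subset_mor (sub_tensor R S) (sub_tensor R' S') (rel_tensor M N))
 \<and> (\<forall>(R::'a set) (R'::'c set) (S::'b set) (S'::'d set) M N.
      subset_mor R' R M \<and> subset_mor S S' N \<longrightarrow>
      subset_mor (sub_limp R S) (sub_limp R' S') (rel_limp M N))
 \<and> \<comment> \<open>associator and its inverse\<close>
   (\<forall>(R::'a set) (S::'b set) (T::'c set).
      subset_mor (sub_tensor (sub_tensor R S) T) (sub_tensor R (sub_tensor S T)) rel_assoc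
    \<and> subset_mor (sub_tensor R (sub_tensor S T)) (sub_tensor (sub_tensor R S) T) (converse rel_assoc))
 \<and> \<comment> \<open>unitors and their inverses\<close>
   (\<forall>R::'a set.
      subset_mor (sub_tensor sub_unit R) R rel_lunit
    \<and> subset_mor R (sub_tensor sub_unit R) (converse rel_lunit)
    \<and> subset_mor (sub_tensor R sub_unit) R rel_runit
    \<and> subset_mor R (sub_tensor R sub_unit) (converse rel_runit))
 \<and> \<comment> \<open>symmetry\<close>
   (\<forall>(R::'a set) (S::'b set).
      subset_mor (sub_tensor R S) (sub_tensor S R) rel_sym)
 \<and> \<comment> \<open>closedness: the currying bijection of Rel restricts to Subset\<close>
   (\<forall>(R::'a set) (S::'b set) (T::'c set) M.
      subset_mor (sub_tensor R S) T M \<longleftrightarrow> subset_mor R (sub_limp S T) (rel_curry M))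
 \<and> (\<forall>(R::'a set) (S::'b set).
      subset_mor (sub_tensor (sub_limp R S) R) S rel_eval)"
  by (intro conjI allI impI; (elim conjE)?)
    (fact subset_mor_rel_tensor subset_mor_rel_limp subset_mor_rel_assoc
      subset_mor_converse_rel_assoc subset_mor_rel_lunit subset_mor_converse_rel_lunit
      subset_mor_rel_runit subset_mor_converse_rel_runit subset_mor_rel_sym
      subset_mor_rel_curry_iff subset_mor_rel_eval)+

end
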